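(* Consider the agents $$\dot x_i=\sum_{j=1}^N\alpha_{ij}(t)(y_j-y_i),\qquad y_i=\mathrm{sat}(x_i),\qquad i\in\mathcal V=\{1,\dots,N\},$$ with a common saturation level $s>0$, where the time-varying undirected weights satisfy the standing assumptions and the graph is integrally connected over $[0,\infty)$. Assume that not all $x_i(t_0)$ are equal. Then the agents achieve consensus if and only if $$\frac1N\Big|\sum_{i=1}^N x_i(t_0)\Big|\le s.$$
   Context: $\mathrm{sat}(x)=\mathrm{sign}(x)\min\{|x|,s\}$. Standing assumptions: $\alpha_{ij}(t)=\alpha_{ji}(t)\ge0$, each $\alpha_{ij}$ continuous on $[0,\infty)$ except on a set of measure zero; Carathéodory solutions. Integral graph: adjacency $\bar\alpha_{ij}=1$ if $\int_0^\infty\alpha_{ij}(t)dt=\infty$, else $0$; the time-varying graph is integrally connected over $[0,\infty)$ if this integral graph is connected. Consensus: there is $C\in\mathbb R$ with $\lim_{t\to\infty}x_i(t)=C$ for all $i$. *)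

theory Defs
  imports "HOL-Analysis.Analysis"
begin

definition sat :: "real \<Rightarrow> real \<Rightarrow> real" where
  "sat s x = sgn x * min \<bar>x\<bar> s"

text \<open>Standing assumptions on the weights alpha i j (agents indexed by 0..N-1):
  symmetric, nonnegative on [0,inf), continuous on [0,inf) except on a Lebesgue null set,
  and locally integrable on [0,inf) (implicit in the Caratheodory framework).\<close>
definition standing_weights :: "nat \<Rightarrow> (nat \<Rightarrow> nat \<Rightarrow> real \<Rightarrow> real) \<Rightarrow> bool" where
  "standing_weights N \<alpha> \<longleftrightarrow>
     (\<forall>i<N. \<forall>j<N.
        (\<forall>t\<ge>0. \<alpha> i j t = \<alpha> j i t \<and> 0 \<le> \<alpha> i j t) \<and>
        (\<exists>Z. Z \<in> null_sets lborel \<and>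
              (\<forall>t\<in>{0..} - Z. continuous (at t within {0..}) (\<alpha> i j))) \<and>
        (\<forall>T\<ge>0. \<alpha> i j absolutely_integrable_on {0..T}))"

definition integral_edge :: "(nat \<Rightarrow> nat \<Rightarrow> real \<Rightarrow> real) \<Rightarrow> nat \<Rightarrow> nat \<Rightarrow> bool" where
  "integral_edge \<alpha> i j \<longleftrightarrow> (\<integral>\<^sup>+ t. ennreal (indicator {0..} t * \<alpha> i j t) \<partial>lborel) = \<infinity>"

definition integrally_connected :: "nat \<Rightarrow> (nat \<Rightarrow> nat \<Rightarrow> real \<Rightarrow> real) \<Rightarrow> bool" where
  "integrally_connected N \<alpha> \<longleftrightarrow>
     (\<forall>i<N. \<forall>j<N. (\<lambda>a b. a < N \<and> b < N \<and> integral_edge \<alpha> a b)\<^sup>*\<^sup>* i j)"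

definition rhs :: "nat \<Rightarrow> real \<Rightarrow> (nat \<Rightarrow> nat \<Rightarrow> real \<Rightarrow> real) \<Rightarrow> (nat \<Rightarrow> real \<Rightarrow> real) \<Rightarrow> nat \<Rightarrow> real \<Rightarrow> real" where
  "rhs N s \<alpha> x i t = (\<Sum>j<N. \<alpha> i j t * (sat s (x j t) - sat s (x i t)))"

definition caratheodory_solution ::
  "nat \<Rightarrow> real \<Rightarrow> (nat \<Rightarrow> nat \<Rightarrow> real \<Rightarrow> real) \<Rightarrow> real \<Rightarrow> (nat \<Rightarrow> real \<Rightarrow> real) \<Rightarrow> bool" where
  "caratheodory_solution N s \<alpha> t0 x \<longleftrightarrow>
     (\<forall>i<N. \<forall>t\<ge>t0. rhs N s \<alpha> x i absolutely_integrable_on {t0..t} \<and>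
        x i t = x i t0 + integral {t0..t} (rhs N s \<alpha> x i))"

definition consensus :: "nat \<Rightarrow> (nat \<Rightarrow> real \<Rightarrow> real) \<Rightarrow> bool" where
  "consensus N x \<longleftrightarrow> (\<exists>C::real. \<forall>i<N. (x i \<longlongrightarrow> C) at_top)"

end

theory Submission
  imports Defs
begin

text \<open>
  The flows are antisymmetric, so the sum of the states is conserved and any consensus value is
  the initial average. If that average exceeds \<open>s\<close>, eventually every agent exceeds \<open>s\<close>; all
  flows then vanish, and looking back to the last time some agent was at most \<open>s\<close> shows that the
  agents were frozen from the start, which is impossible for distinct initial states.

  Conversely, for every level \<open>c\<close> the excess \<open>\<Sum>\<^sub>i max 0 (x\<^sub>i - c)\<close> is nonincreasing: its increment
  over a short interval is quadratic in the total activity there. Hence it converges, and its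
  second difference in \<open>c\<close> shows that levels which the agents keep approaching cannot be dense.
  A level \<open>c \<in> (-s, s)\<close> that the agents eventually avoid cannot separate them: the saturated
  states differ by a fixed gap across \<open>c\<close>, so an edge of the integral graph crossing the cut
  would drain the upper group by an unbounded amount. With conservation this squeezes all agents
  towards the average.
\<close>

lemma sat_eq_clamp: "s > 0 \<Longrightarrow> sat s z = max (- s) (min z s)"
  by (auto simp: sat_def sgn_if min_def max_def)

lemma sat_mono: "s > 0 \<Longrightarrow> a \<le> b \<Longrightarrow> sat s a \<le> sat s b"
  by (simp add: sat_eq_clamp)

lemma sat_diff_le: "s > 0 \<Longrightarrow> sat s b - sat s a \<le> max 0 (b - a)"
  by (simp add: sat_eq_clamp max_def min_def)

lemma sat_minus: "sat s (- z) = - sat s z"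
  by (simp add: sat_def)

lemma sum_antisymmetric_flux_eq_zero:
  fixes a :: "'a \<Rightarrow> 'a \<Rightarrow> real"
  assumes "\<And>i j. i \<in> L \<Longrightarrow> j \<in> L \<Longrightarrow> a i j = a j i"
  shows "(\<Sum>i\<in>L. \<Sum>j\<in>L. a i j * (y j - y i)) = 0"
proof -
  let ?S = "\<Sum>i\<in>L. \<Sum>j\<in>L. a i j * (y j - y i)"
  have "?S = (\<Sum>j\<in>L. \<Sum>i\<in>L. a i j * (y j - y i))" by (rule sum.swap)
  also have "\<dots> = (\<Sum>j\<in>L. \<Sum>i\<in>L. - (a j i * (y i - y j)))"
    using assms by (intro sum.cong refl) (auto simp: algebra_simps)
  also have "\<dots> = - ?S" by (simp add: sum_negf)
  finally show ?thesis by simp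
qed

lemma sum_flux_eq_cut_flux:
  fixes a :: "'a \<Rightarrow> 'a \<Rightarrow> real"
  assumes "\<And>i j. i \<in> V \<Longrightarrow> j \<in> V \<Longrightarrow> a i j = a j i" and "L \<subseteq> V" and "finite V"
  shows "(\<Sum>i\<in>L. \<Sum>j\<in>V. a i j * (y j - y i)) = (\<Sum>i\<in>L. \<Sum>j\<in>V - L. a i j * (y j - y i))"
proof -
  have "(\<Sum>i\<in>L. \<Sum>j\<in>V. a i j * (y j - y i))
      = (\<Sum>i\<in>L. \<Sum>j\<in>L. a i j * (y j - y i)) + (\<Sum>i\<in>L. \<Sum>j\<in>V - L. a i j * (y j - y i))"
    unfolding sum.distrib[symmetric]
    by (intro sum.cong refl, subst sum.subset_diff[OF assms(2,3)]) (simp add: add.commute)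
  moreover have "(\<Sum>i\<in>L. \<Sum>j\<in>L. a i j * (y j - y i)) = 0"
    using assms by (intro sum_antisymmetric_flux_eq_zero) auto
  ultimately show ?thesis by simp
qed

lemma exists_subinterval_halving:
  fixes V F :: "real \<Rightarrow> real"
  assumes ab: "a \<le> b" and F_cont: "continuous_on {a..b} F"
    and F_mono: "\<And>u v. a \<le> u \<Longrightarrow> u \<le> v \<Longrightarrow> v \<le> b \<Longrightarrow> F u \<le> F v"
  shows "\<exists>u v. a \<le> u \<and> u \<le> v \<and> v \<le> b \<and> (V b - V a) / 2^n \<le> V v - V u \<and>
    F v - F u = (F b - F a) / 2^n"
proof (induction n)
  case 0
  then show ?case using ab by auto
next
  case (Suc n)
  then obtain u v where uv: "a \<le> u" "u \<le> v" "v \<le> b" "(V b - V a) / 2^n \<le> V v - V u"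
    "F v - F u = (F b - F a) / 2^n"
    by blast
  have "F u \<le> (F u + F v) / 2" "(F u + F v) / 2 \<le> F v" using F_mono[OF uv(1,2,3)] by auto
  moreover have "continuous_on {u..v} F" using uv by (intro continuous_on_subset[OF F_cont]) auto
  ultimately obtain w where w: "u \<le> w" "w \<le> v" "F w = (F u + F v) / 2"
    using IVT'[of F u "(F u + F v) / 2" v] uv by blast
  have halves: "F w - F u = (F b - F a) / 2 ^ Suc n" "F v - F w = (F b - F a) / 2 ^ Suc n"
    using w(3) uv(5) by auto
  show ?case
  proof (cases "(V b - V a) / 2 ^ Suc n \<le> V w - V u")
    case True
    then show ?thesis using halves w uv by (intro exI[of _ u] exI[of _ w]) auto
  next
    case False
    then have "(V b - V a) / 2 ^ Suc n \<le> V v - V w" using uv(4) by (auto simp: field_simps)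
    then show ?thesis using halves w uv by (intro exI[of _ w] exI[of _ v]) auto
  qed
qed

text \<open>
  By halving, an increase \<open>d\<close> of \<open>V\<close> yields intervals on which \<open>V\<close> grows by \<open>d / 2\<^sup>n\<close> while
  \<open>F\<close> grows only by \<open>(F b - F a) / 2\<^sup>n\<close>; the quadratic bound fails for large \<open>n\<close>.
\<close>
lemma nonincreasing_if_increments_le_square:
  fixes V F :: "real \<Rightarrow> real"
  assumes ab: "a \<le> b" and F_cont: "continuous_on {a..b} F"
    and F_mono: "\<And>u v. a \<le> u \<Longrightarrow> u \<le> v \<Longrightarrow> v \<le> b \<Longrightarrow> F u \<le> F v"
    and V_incr: "\<And>u v. a \<le> u \<Longrightarrow> u \<le> v \<Longrightarrow> v \<le> b \<Longrightarrow> V v - V u \<le> K * (F v - F u)^2"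
  shows "V b \<le> V a"
proof (rule ccontr)
  assume "\<not> ?thesis"
  define d where "d = V b - V a"
  define D where "D = F b - F a"
  have d: "d > 0" using \<open>\<not> V b \<le> V a\<close> by (simp add: d_def)
  have "d \<le> K * D^2 / 2^n" for n
  proof -
    obtain u v where uv: "a \<le> u" "u \<le> v" "v \<le> b" "d / 2^n \<le> V v - V u" "F v - F u = D / 2^n"
      using exists_subinterval_halving[OF ab F_cont F_mono, of V n] by (auto simp: d_def D_def)
    have "d / 2^n \<le> K * (D / 2^n)^2" using V_incr[OF uv(1,2,3)] uv(4,5) by simp
    also have "\<dots> = (K * D^2 / 2^n) / 2^n" by (simp add: power_divide power2_eq_square)
    finally show ?thesis by (simp only: divide_le_cancel) simp
  qed
  moreover obtain n where "K * D^2 / d < 2^n" using real_arch_pow[of 2 "K * D^2 / d"] by auto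
  then have "K * D^2 < 2^n * d" using d by (simp add: pos_divide_less_eq)
  moreover have "d * 2^n \<le> K * D^2" using calculation(1)[of n] by (simp add: pos_le_divide_eq)
  ultimately show False using mult.commute[of d "2^n"] by linarith
qed

lemma antimono_bounded_below_convergent_at_top:
  fixes f :: "real \<Rightarrow> real"
  assumes antimono: "\<And>u v. a \<le> u \<Longrightarrow> u \<le> v \<Longrightarrow> f v \<le> f u"
    and bounded: "\<And>t. a \<le> t \<Longrightarrow> b \<le> f t"
  shows "\<exists>l. (f \<longlongrightarrow> l) at_top"
proof -
  define S where "S = f ` {a..}"
  have "S \<noteq> {}" by (auto simp: S_def)
  have "bdd_below S" unfolding S_def bdd_below_def using bounded by auto
  show ?thesis
  proof (intro exI decreasing_tendsto)
    show "\<forall>\<^sub>F t in at_top. Inf S \<le> f t"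
      using \<open>bdd_below S\<close> by (intro eventually_at_top_linorderI[of a]) (auto intro!: cInf_lower simp: S_def)
  next
    fix y assume "Inf S < y"
    then obtain t1 where t1: "a \<le> t1" "f t1 < y"
      using cInf_less_iff[OF \<open>S \<noteq> {}\<close> \<open>bdd_below S\<close>] by (auto simp: S_def)
    show "\<forall>\<^sub>F t in at_top. f t < y"
      using t1 antimono by (intro eventually_at_top_linorderI[of t1]) force
  qed
qed

lemma max_zero_second_difference:
  fixes y c \<delta> :: real
  assumes "\<delta> > 0"
  shows "max 0 (y - (c - \<delta>)) - 2 * max 0 (y - c) + max 0 (y - (c + \<delta>)) = max 0 (\<delta> - \<bar>y - c\<bar>)"
  using assms by (auto simp: max_def abs_if)

lemma rtranclp_exit_step:
  assumes "R\<^sup>*\<^sup>* a b" "P a" "\<not> P b"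
  shows "\<exists>u v. R u v \<and> P u \<and> \<not> P v"
  using assms by (induction rule: rtranclp_induct) auto

lemma continuous_on_avoiding_level_same_side:
  fixes f :: "real \<Rightarrow> real"
  assumes "a \<le> b" and "continuous_on {a..b} f" and "\<And>u. u \<in> {a..b} \<Longrightarrow> f u \<noteq> c"
  shows "c < f b \<longleftrightarrow> c < f a"
proof (rule ccontr)
  assume "\<not> ?thesis"
  then have "f a \<le> c \<and> c \<le> f b \<or> f b \<le> c \<and> c \<le> f a" by auto
  then obtain u where "u \<in> {a..b}" "f u = c"
    using IVT'[of f a c b] IVT2'[of f b c a] assms(1,2) by auto
  then show False using assms(3) by blast
qed

lemma member_ge_if_sum_eq_and_upper_bounds:
  fixes y :: "'a \<Rightarrow> real"
  assumes "finite V" "i \<in> V" and sum: "(\<Sum>j\<in>V. y j) = real (card V) * A"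
    and upper: "\<And>j. j \<in> V \<Longrightarrow> y j \<le> A + d"
  shows "A - (real (card V) - 1) * d \<le> y i"
proof -
  have "real (card V) * A = y i + (\<Sum>j\<in>V - {i}. y j)"
    using assms(1,2) sum by (simp add: sum.remove)
  also have "(\<Sum>j\<in>V - {i}. y j) \<le> (\<Sum>j\<in>V - {i}. A + d)"
    using upper by (intro sum_mono) auto
  also have "\<dots> = (real (card V) - 1) * (A + d)"
  proof -
    have "1 \<le> card V" using assms(1,2) by (metis One_nat_def Suc_leI card_gt_0_iff empty_iff)
    then show ?thesis using assms(1,2) by (simp add: of_nat_diff)
  qed
  finally show ?thesis by (simp add: algebra_simps)
qed

lemma nn_integral_atLeast_finite_if_integrals_bounded:
  fixes f :: "real \<Rightarrow> real"
  assumes nonneg: "\<And>t. 0 \<le> t \<Longrightarrow> 0 \<le> f t"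
    and integrable: "\<And>t. 0 \<le> t \<Longrightarrow> f integrable_on {0..t}"
    and bounded: "\<And>t. 0 \<le> t \<Longrightarrow> integral {0..t} f \<le> M"
  shows "(\<integral>\<^sup>+ t. ennreal (indicator {0..} t * f t) \<partial>lborel) \<noteq> \<infinity>"
proof -
  define g where "g t = (if t \<in> {0..} then f t else 0)" for t :: real
  define h where "h k t = (if t \<in> {0..real k} then f t else 0)" for k :: nat and t :: real
  have h_integral: "integral UNIV (h k) = integral {0..real k} f" for k
    unfolding h_def by (rule Henstock_Kurzweil_Integration.integral_restrict_UNIV)
  have "bounded (range (\<lambda>k. integral UNIV (h k)))"
    unfolding bounded_real
  proof (intro exI ballI)
    fix y assume "y \<in> range (\<lambda>k. integral UNIV (h k))"
    then obtain k where k: "y = integral {0..real k} f" using h_integral by auto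
    have "0 \<le> integral {0..real k} f" using integrable[of "real k"] nonneg by (intro integral_nonneg) auto
    then show "\<bar>y\<bar> \<le> M" using bounded[of "real k"] k by simp
  qed
  moreover have "(\<lambda>k. h k t) \<longlonglongrightarrow> g t" for t
  proof (rule tendsto_eventually, rule eventually_sequentiallyI[of "nat \<lceil>t\<rceil>"])
    fix k assume "nat \<lceil>t\<rceil> \<le> k"
    then have "t \<le> real k" by linarith
    then show "h k t = g t" unfolding h_def g_def by auto
  qed
  moreover have "h k t \<le> h (Suc k) t" for k t unfolding h_def using nonneg[of t] by auto
  moreover have "h k integrable_on UNIV" for k
    unfolding h_def integrable_restrict_UNIV by (rule integrable) simp
  ultimately have "g integrable_on UNIV"
    using monotone_convergence_increasing[of h UNIV g] by blast
  then have "(f has_integral integral {0..} f) {0..}"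
    unfolding g_def integrable_restrict_UNIV by (rule integrable_integral)
  then have "(\<integral>\<^sup>+ t. ennreal (indicator {0..} t * f t) \<partial>lborel) = ennreal (integral {0..} f)"
    by (intro nn_integral_has_integral_lebesgue) (use nonneg in auto)
  then show ?thesis by simp
qed

lemma nn_integral_atLeast_finite_if_tail_integrals_bounded:
  fixes f :: "real \<Rightarrow> real"
  assumes nonneg: "\<And>t. 0 \<le> t \<Longrightarrow> 0 \<le> f t"
    and integrable: "\<And>a b. 0 \<le> a \<Longrightarrow> f integrable_on {a..b}"
    and "0 \<le> T" and tail: "\<And>t. T \<le> t \<Longrightarrow> integral {T..t} f \<le> M"
  shows "(\<integral>\<^sup>+ t. ennreal (indicator {0..} t * f t) \<partial>lborel) \<noteq> \<infinity>"
proof (rule nn_integral_atLeast_finite_if_integrals_bounded[where M = "integral {0..T} f + M"])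
  fix t :: real assume "0 \<le> t"
  show "integral {0..t} f \<le> integral {0..T} f + M"
  proof (cases "t \<le> T")
    case True
    have "integral {0..t} f \<le> integral {0..T} f"
      using True \<open>0 \<le> t\<close> nonneg integrable[of 0] by (intro integral_subset_le) auto
    moreover have "0 \<le> M" using tail[of T] by simp
    ultimately show ?thesis by linarith
  next
    case False
    then have "integral {0..t} f = integral {0..T} f + integral {T..t} f"
      using \<open>0 \<le> T\<close> integrable[of 0 t]
      by (intro Henstock_Kurzweil_Integration.integral_combine[symmetric]) auto
    then show ?thesis using tail[of t] False by simp
  qed
next
  show "0 \<le> t \<Longrightarrow> 0 \<le> f t" for t by (rule nonneg)
  show "0 \<le> t \<Longrightarrow> f integrable_on {0..t}" for t by (rule integrable) simp
qed

lemma consensus_uminus: "consensus N (\<lambda>i t. - x i t) \<longleftrightarrow> consensus N x"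
proof -
  have neg: "((\<lambda>t. - x i t) \<longlongrightarrow> C) at_top \<longleftrightarrow> (x i \<longlongrightarrow> - C) at_top" for i C
    using tendsto_minus_cancel_left[of "x i" C at_top] by simp
  show ?thesis
  proof
    assume "consensus N (\<lambda>i t. - x i t)"
    then obtain C where "\<forall>i<N. ((\<lambda>t. - x i t) \<longlongrightarrow> C) at_top" unfolding consensus_def by blast
    then show "consensus N x" unfolding consensus_def neg by blast
  next
    assume "consensus N x"
    then obtain C where "\<forall>i<N. (x i \<longlongrightarrow> C) at_top" unfolding consensus_def by blast
    then have "\<forall>i<N. ((\<lambda>t. - x i t) \<longlongrightarrow> - C) at_top" unfolding neg by simp
    then show "consensus N (\<lambda>i t. - x i t)" unfolding consensus_def by blast
  qed
qed

locale saturated_consensus =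
  fixes N :: nat and s t0 :: real and \<alpha> :: "nat \<Rightarrow> nat \<Rightarrow> real \<Rightarrow> real"
    and x :: "nat \<Rightarrow> real \<Rightarrow> real"
  assumes s_pos: "s > 0" and t0_nonneg: "t0 \<ge> 0" and weights: "standing_weights N \<alpha>"
    and solution: "caratheodory_solution N s \<alpha> t0 x"
begin

abbreviation flow :: "nat \<Rightarrow> real \<Rightarrow> real" where
  "flow i \<equiv> rhs N s \<alpha> x i"

lemma weight_sym: "i < N \<Longrightarrow> j < N \<Longrightarrow> t \<ge> 0 \<Longrightarrow> \<alpha> i j t = \<alpha> j i t"
  using weights unfolding standing_weights_def by blast

lemma weight_nonneg: "i < N \<Longrightarrow> j < N \<Longrightarrow> t \<ge> 0 \<Longrightarrow> 0 \<le> \<alpha> i j t"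
  using weights unfolding standing_weights_def by blast

lemma weight_integrable:
  assumes "i < N" "j < N" "0 \<le> a"
  shows "\<alpha> i j integrable_on {a..b}"
proof -
  have "\<alpha> i j absolutely_integrable_on {0..max b 0}"
    using weights assms unfolding standing_weights_def by auto
  then have "\<alpha> i j integrable_on {0..max b 0}" by (simp add: absolutely_integrable_on_def)
  then show ?thesis by (rule integrable_on_subinterval) (use assms in auto)
qed

lemma flow_integrable:
  assumes "i < N" "t0 \<le> a"
  shows "flow i integrable_on {a..b}" and "(\<lambda>t. \<bar>flow i t\<bar>) integrable_on {a..b}"
proof -
  have "flow i absolutely_integrable_on {t0..max b t0}"
    using solution assms unfolding caratheodory_solution_def by auto
  then have "flow i integrable_on {t0..max b t0}" "(\<lambda>t. \<bar>flow i t\<bar>) integrable_on {t0..max b t0}"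
    by (auto simp: absolutely_integrable_on_def)
  then show "flow i integrable_on {a..b}" "(\<lambda>t. \<bar>flow i t\<bar>) integrable_on {a..b}"
    using assms(2) by (auto intro!: integrable_on_subinterval[where S = "{t0..max b t0}"])
qed

lemma state_eq_integral: "i < N \<Longrightarrow> t0 \<le> t \<Longrightarrow> x i t = x i t0 + integral {t0..t} (flow i)"
  using solution unfolding caratheodory_solution_def by blast

lemma state_increment:
  assumes "i < N" "t0 \<le> a" "a \<le> b"
  shows "x i b - x i a = integral {a..b} (flow i)"
proof -
  have "integral {t0..b} (flow i) = integral {t0..a} (flow i) + integral {a..b} (flow i)"
    using assms flow_integrable(1)[OF assms(1) order_refl, of b]
    by (intro Henstock_Kurzweil_Integration.integral_combine[symmetric]) auto
  then show ?thesis using state_eq_integral[of i a] state_eq_integral[of i b] assms by simp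
qed

lemma state_continuous:
  assumes "i < N"
  shows "continuous_on {t0..b} (x i)"
proof (rule continuous_on_eq)
  show "continuous_on {t0..b} (\<lambda>t. x i t0 + integral {t0..t} (flow i))"
    by (intro continuous_intros indefinite_integral_continuous_1 flow_integrable assms order_refl)
next
  fix t assume "t \<in> {t0..b}"
  then show "x i t0 + integral {t0..t} (flow i) = x i t" using state_eq_integral[OF assms, of t] by simp
qed

lemma sum_flow_eq_cut_flux:
  assumes "L \<subseteq> {..<N}" "t \<ge> 0"
  shows "(\<Sum>i\<in>L. flow i t) = (\<Sum>i\<in>L. \<Sum>j\<in>{..<N} - L. \<alpha> i j t * (sat s (x j t) - sat s (x i t)))"
  unfolding rhs_def using assms weight_sym
  by (intro sum_flux_eq_cut_flux[where a = "\<lambda>i j. \<alpha> i j t" and y = "\<lambda>j. sat s (x j t)"]) auto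

lemma sum_flow_integrable: "L \<subseteq> {..<N} \<Longrightarrow> t0 \<le> a \<Longrightarrow> (\<lambda>t. \<Sum>i\<in>L. flow i t) integrable_on {a..b}"
  by (intro integrable_sum flow_integrable) (auto dest: finite_subset)

lemma sum_state_increment:
  assumes "L \<subseteq> {..<N}" "t0 \<le> a" "a \<le> b"
  shows "(\<Sum>i\<in>L. x i b) - (\<Sum>i\<in>L. x i a) = integral {a..b} (\<lambda>t. \<Sum>i\<in>L. flow i t)"
proof -
  have "(\<Sum>i\<in>L. x i b) - (\<Sum>i\<in>L. x i a) = (\<Sum>i\<in>L. integral {a..b} (flow i))"
    unfolding sum_subtractf[symmetric] using assms by (intro sum.cong refl state_increment) auto
  also have "\<dots> = integral {a..b} (\<lambda>t. \<Sum>i\<in>L. flow i t)"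
    using assms by (intro integral_sum[symmetric] flow_integrable) (auto dest: finite_subset)
  finally show ?thesis .
qed

lemma sum_state_const:
  assumes "t0 \<le> t"
  shows "(\<Sum>i<N. x i t) = (\<Sum>i<N. x i t0)"
proof -
  have "(\<Sum>i<N. flow i \<tau>) = 0" if "\<tau> \<in> {t0..t}" for \<tau>
    using sum_flow_eq_cut_flux[of "{..<N}" \<tau>] that t0_nonneg by simp
  then have "integral {t0..t} (\<lambda>\<tau>. \<Sum>i<N. flow i \<tau>) = integral {t0..t} (\<lambda>_. 0)"
    by (rule integral_cong)
  then show ?thesis using sum_state_increment[of "{..<N}" t0 t] assms by simp
qed

lemma flow_eq_zero_if_saturated_above:
  assumes "\<forall>j<N. s \<le> x j t" "i < N"
  shows "flow i t = 0"
  using assms s_pos by (simp add: rhs_def sat_eq_clamp)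

lemma uminus: "saturated_consensus N s t0 \<alpha> (\<lambda>i t. - x i t)"
proof
  have flow_minus: "rhs N s \<alpha> (\<lambda>i t. - x i t) i = (\<lambda>t. - flow i t)" for i
    unfolding rhs_def by (auto simp: sat_minus sum_negf[symmetric] algebra_simps)
  show "caratheodory_solution N s \<alpha> t0 (\<lambda>i t. - x i t)"
    unfolding caratheodory_solution_def flow_minus
  proof (intro allI impI conjI)
    fix i t assume "i < N" "t0 \<le> t"
    then show "(\<lambda>t. - flow i t) absolutely_integrable_on {t0..t}"
      using flow_integrable[of i t0 t] by (auto simp: absolutely_integrable_on_def integrable_neg)
    show "- x i t = - x i t0 + integral {t0..t} (\<lambda>t. - flow i t)"
      using state_eq_integral[OF \<open>i < N\<close> \<open>t0 \<le> t\<close>] by simp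
  qed
qed (use s_pos t0_nonneg weights in auto)

definition rate :: "real \<Rightarrow> real" where
  "rate t = (\<Sum>i<N. \<bar>flow i t\<bar>) + (\<Sum>i<N. \<Sum>j<N. \<alpha> i j t)"

text \<open>
  The activity controls both the motion of each agent and the total weight, the two factors of
  the increments of the excess below.
\<close>
definition activity :: "real \<Rightarrow> real" where
  "activity t = integral {t0..t} rate"

lemma rate_integrable: "t0 \<le> a \<Longrightarrow> rate integrable_on {a..b}"
  unfolding rate_def using t0_nonneg
  by (intro integrable_add integrable_sum flow_integrable(2) weight_integrable) auto

lemma weight_sum_le_rate: "(\<Sum>i<N. \<Sum>j<N. \<alpha> i j t) \<le> rate t"
  unfolding rate_def by simp

lemma abs_flow_le_rate:
  assumes "i < N" "t \<ge> 0"
  shows "\<bar>flow i t\<bar> \<le> rate t"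
proof -
  have "\<bar>flow i t\<bar> \<le> (\<Sum>k<N. \<bar>flow k t\<bar>)" using assms by (intro member_le_sum) auto
  moreover have "0 \<le> (\<Sum>i<N. \<Sum>j<N. \<alpha> i j t)" using assms weight_nonneg by (intro sum_nonneg) auto
  ultimately show ?thesis unfolding rate_def by linarith
qed

lemma rate_nonneg: "t \<ge> 0 \<Longrightarrow> 0 \<le> rate t"
  unfolding rate_def using weight_nonneg by (intro add_nonneg_nonneg sum_nonneg) auto

lemma activity_increment: "t0 \<le> a \<Longrightarrow> a \<le> b \<Longrightarrow> activity b - activity a = integral {a..b} rate"
  unfolding activity_def using rate_integrable[of t0 b]
  by (simp add: Henstock_Kurzweil_Integration.integral_combine[symmetric])

lemma activity_mono:
  assumes "t0 \<le> a" "a \<le> b"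
  shows "activity a \<le> activity b"
proof -
  have "0 \<le> integral {a..b} rate"
    using assms t0_nonneg by (intro integral_nonneg rate_integrable) (auto intro!: rate_nonneg)
  then show ?thesis using activity_increment[OF assms] by simp
qed

lemma activity_continuous: "continuous_on {t0..b} activity"
  unfolding activity_def by (intro indefinite_integral_continuous_1 rate_integrable order_refl)

lemma state_change_le_activity:
  assumes "i < N" "t0 \<le> a" "a \<le> \<tau>" "\<tau> \<le> b"
  shows "\<bar>x i b - x i \<tau>\<bar> \<le> activity b - activity a"
proof -
  have "\<bar>x i b - x i \<tau>\<bar> = \<bar>integral {\<tau>..b} (flow i)\<bar>" using state_increment[of i \<tau> b] assms by simp
  also have "\<dots> \<le> integral {\<tau>..b} rate"
    using integral_norm_bound_integral[of "flow i" "{\<tau>..b}" rate] assms t0_nonneg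
      flow_integrable(1)[of i \<tau> b] rate_integrable[of \<tau> b] abs_flow_le_rate[of i]
    by auto
  also have "\<dots> \<le> integral {a..b} rate"
    using assms t0_nonneg by (intro integral_subset_le rate_integrable) (auto intro!: rate_nonneg)
  finally show ?thesis using activity_increment[of a b] assms by simp
qed

definition excess :: "real \<Rightarrow> real \<Rightarrow> real" where
  "excess c t = (\<Sum>i<N. max 0 (x i t - c))"

text \<open>
  Agents above \<open>c\<close> at time \<open>b\<close> gain only from agents below \<open>c\<close> at time \<open>b\<close>, and on \<open>[a, b]\<close>
  no state moves by more than the activity there.
\<close>
lemma sum_flow_upper_group_le:
  assumes "t0 \<le> a" "a \<le> t" "t \<le> b" and L: "L = {i. i < N \<and> c < x i b}"
  shows "(\<Sum>i\<in>L. flow i t) \<le> 2 * (activity b - activity a) * rate t"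
proof -
  define \<Delta> where "\<Delta> = activity b - activity a"
  have "t \<ge> 0" "0 \<le> \<Delta>" using assms t0_nonneg activity_mono[of a b] by (auto simp: \<Delta>_def)
  have LN: "L \<subseteq> {..<N}" by (auto simp: L)
  have "(\<Sum>i\<in>L. flow i t) = (\<Sum>i\<in>L. \<Sum>j\<in>{..<N} - L. \<alpha> i j t * (sat s (x j t) - sat s (x i t)))"
    using sum_flow_eq_cut_flux[OF LN \<open>t \<ge> 0\<close>] .
  also have "\<dots> \<le> (\<Sum>i\<in>L. \<Sum>j\<in>{..<N} - L. 2 * \<Delta> * \<alpha> i j t)"
  proof (intro sum_mono)
    fix i j assume i: "i \<in> L" and j: "j \<in> {..<N} - L"
    then have "\<bar>x i b - x i t\<bar> \<le> \<Delta>" "\<bar>x j b - x j t\<bar> \<le> \<Delta>" "x j b \<le> c" "c < x i b"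
      using state_change_le_activity assms by (auto simp: \<Delta>_def L)
    then have "sat s (x j t) - sat s (x i t) \<le> 2 * \<Delta>"
      using sat_diff_le[OF s_pos, of "x j t" "x i t"] \<open>0 \<le> \<Delta>\<close> by linarith
    then show "\<alpha> i j t * (sat s (x j t) - sat s (x i t)) \<le> 2 * \<Delta> * \<alpha> i j t"
      using weight_nonneg[of i j t] i j LN \<open>t \<ge> 0\<close> by (simp add: mult.commute mult_left_mono subset_eq)
  qed
  also have "\<dots> \<le> (\<Sum>i<N. \<Sum>j<N. 2 * \<Delta> * \<alpha> i j t)"
    using LN \<open>0 \<le> \<Delta>\<close> weight_nonneg \<open>t \<ge> 0\<close>
    by (intro order_trans[OF sum_mono sum_mono2] sum_mono2) (auto intro!: sum_nonneg)
  also have "\<dots> \<le> 2 * \<Delta> * rate t"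
    using weight_sum_le_rate[of t] \<open>0 \<le> \<Delta>\<close> by (simp add: sum_distrib_left[symmetric] mult_left_mono)
  finally show ?thesis by (simp add: \<Delta>_def)
qed

lemma excess_increment_le:
  assumes "t0 \<le> a" "a \<le> b"
  shows "excess c b - excess c a \<le> 2 * (activity b - activity a)^2"
proof -
  define L where "L = {i. i < N \<and> c < x i b}"
  have L: "L \<subseteq> {..<N}" by (auto simp: L_def)
  have "excess c b - excess c a \<le> (\<Sum>i<N. if i \<in> L then x i b - x i a else 0)"
    unfolding excess_def sum_subtractf[symmetric] by (rule sum_mono) (auto simp: L_def)
  also have "\<dots> = (\<Sum>i\<in>L. x i b) - (\<Sum>i\<in>L. x i a)"
    using L by (simp add: sum.If_cases Int_absorb1 sum_subtractf)
  also have "\<dots> = integral {a..b} (\<lambda>t. \<Sum>i\<in>L. flow i t)"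
    using sum_state_increment L assms by blast
  also have "\<dots> \<le> integral {a..b} (\<lambda>t. 2 * (activity b - activity a) * rate t)"
    using L assms sum_flow_upper_group_le[OF assms(1) _ _ L_def]
    by (intro integral_le sum_flow_integrable integrable_on_mult_right rate_integrable) auto
  also have "\<dots> = 2 * (activity b - activity a)^2"
    using activity_increment[OF assms] by (simp add: power2_eq_square)
  finally show ?thesis .
qed

lemma excess_antimono: "t0 \<le> a \<Longrightarrow> a \<le> b \<Longrightarrow> excess c b \<le> excess c a"
  by (rule nonincreasing_if_increments_le_square[where F = activity and K = 2])
    (auto intro: continuous_on_subset[OF activity_continuous] activity_mono excess_increment_le)

lemma excess_convergent: "\<exists>l. (excess c \<longlongrightarrow> l) at_top"
proof (rule antimono_bounded_below_convergent_at_top[where a = t0 and b = 0])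
  show "0 \<le> excess c t" for t unfolding excess_def by (intro sum_nonneg) auto
qed (rule excess_antimono)

definition avoided :: "real \<Rightarrow> bool" where
  "avoided c \<longleftrightarrow> (\<exists>\<delta>>0. \<forall>\<^sub>F t in at_top. \<forall>i<N. \<delta> \<le> \<bar>x i t - c\<bar>)"

definition nearness :: "real \<Rightarrow> real \<Rightarrow> real \<Rightarrow> real" where
  "nearness \<delta> c t = (\<Sum>i<N. max 0 (\<delta> - \<bar>x i t - c\<bar>))"

lemma excess_second_difference:
  assumes "\<delta> > 0"
  shows "excess (c - \<delta>) t - 2 * excess c t + excess (c + \<delta>) t = nearness \<delta> c t"
  unfolding excess_def nearness_def sum_distrib_left sum_subtractf[symmetric] sum.distrib[symmetric]
  using max_zero_second_difference[OF assms] by simp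

lemma nearness_convergent:
  assumes "\<delta> > 0"
  shows "\<exists>l. (nearness \<delta> c \<longlongrightarrow> l) at_top"
proof -
  obtain l1 l2 l3 where "(excess (c - \<delta>) \<longlongrightarrow> l1) at_top" "(excess c \<longlongrightarrow> l2) at_top"
    "(excess (c + \<delta>) \<longlongrightarrow> l3) at_top"
    using excess_convergent[of "c - \<delta>"] excess_convergent[of c] excess_convergent[of "c + \<delta>"] by blast
  then have "((\<lambda>t. excess (c - \<delta>) t - 2 * excess c t + excess (c + \<delta>) t) \<longlongrightarrow> l1 - 2 * l2 + l3) at_top"
    by (intro tendsto_intros)
  then show ?thesis unfolding excess_second_difference[OF assms] by (auto simp: fun_eq_iff)
qed

text \<open>
  The limit of the nearness is at least \<open>\<delta>/2\<close>, since some agent is \<open>\<delta>/2\<close>-close to \<open>c\<close> at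
  arbitrarily late times; hence the nearness is eventually positive.
\<close>
lemma eventually_near_if_not_avoided:
  assumes "\<not> avoided c" "\<delta> > 0"
  shows "\<forall>\<^sub>F t in at_top. \<exists>i<N. \<bar>x i t - c\<bar> < \<delta>"
proof -
  define D where "D = nearness \<delta> c"
  obtain l where lim: "(D \<longlongrightarrow> l) at_top" using nearness_convergent[OF assms(2)] by (auto simp: D_def)
  have "\<not> (\<forall>\<^sub>F t in at_top. \<forall>i<N. \<delta> / 2 \<le> \<bar>x i t - c\<bar>)"
    using assms half_gt_zero[OF assms(2)] unfolding avoided_def by blast
  then have "\<exists>\<^sub>F t in at_top. \<delta> / 2 \<le> D t"
    unfolding not_eventually
  proof (rule frequently_elim1)
    fix t assume "\<not> (\<forall>i<N. \<delta> / 2 \<le> \<bar>x i t - c\<bar>)"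
    then obtain i where "i < N" "\<bar>x i t - c\<bar> < \<delta> / 2" using not_le by blast
    then have "\<delta> / 2 \<le> max 0 (\<delta> - \<bar>x i t - c\<bar>)" by linarith
    also have "\<dots> \<le> D t" unfolding D_def nearness_def using \<open>i < N\<close> by (intro member_le_sum) auto
    finally show "\<delta> / 2 \<le> D t" .
  qed
  then have "\<delta> / 2 \<le> l"
  proof (rule contrapos_pp)
    assume "\<not> \<delta> / 2 \<le> l"
    then have "\<forall>\<^sub>F t in at_top. D t < \<delta> / 2" by (intro order_tendstoD(2)[OF lim]) simp
    then show "\<not> (\<exists>\<^sub>F t in at_top. \<delta> / 2 \<le> D t)"
      unfolding not_frequently by (rule eventually_mono) simp
  qed
  then have "0 < l" using assms(2) by linarith
  then have "\<forall>\<^sub>F t in at_top. 0 < D t" by (rule order_tendstoD(1)[OF lim])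
  then show ?thesis
  proof (rule eventually_mono)
    fix t assume "0 < D t"
    show "\<exists>i<N. \<bar>x i t - c\<bar> < \<delta>"
    proof (rule ccontr)
      assume "\<not> ?thesis"
      then have "D t \<le> 0" unfolding D_def nearness_def by (intro sum_nonpos) auto
      then show False using \<open>0 < D t\<close> by simp
    qed
  qed
qed

text \<open>Pigeonhole: \<open>N\<close> agents cannot stay close to \<open>N + 1\<close> well-separated levels.\<close>
lemma avoided_dense:
  assumes "a < b"
  shows "\<exists>c. a < c \<and> c < b \<and> avoided c"
proof (rule ccontr)
  assume none: "\<not> ?thesis"
  define h where "h = (b - a) / (real N + 2)"
  have h: "h > 0" using assms by (simp add: h_def)
  define c where "c k = a + (real k + 1) * h" for k :: nat
  have "a < c k \<and> c k < b" if "k \<le> N" for k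
  proof -
    have "(real k + 1) * h < (real N + 2) * h" using that h by (intro mult_strict_right_mono) auto
    also have "\<dots> = b - a" using h_def by simp
    finally show ?thesis using h by (simp add: c_def)
  qed
  then have "\<forall>k\<in>{..N}. \<forall>\<^sub>F t in at_top. \<exists>i<N. \<bar>x i t - c k\<bar> < h / 2"
    using none h by (blast intro: eventually_near_if_not_avoided half_gt_zero)
  then have "\<forall>\<^sub>F t in at_top. \<forall>k\<in>{..N}. \<exists>i<N. \<bar>x i t - c k\<bar> < h / 2"
    by (rule eventually_ball_finite[rotated]) simp
  then obtain t where "\<forall>k\<in>{..N}. \<exists>i<N. \<bar>x i t - c k\<bar> < h / 2"
    by (auto simp: eventually_at_top_linorder)
  then obtain f where f: "\<And>k. k \<in> {..N} \<Longrightarrow> f k < N \<and> \<bar>x (f k) t - c k\<bar> < h / 2"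
    by metis
  have "inj_on f {..N}"
  proof (rule inj_onI)
    fix k k' assume k: "k \<in> {..N}" "k' \<in> {..N}" "f k = f k'"
    moreover have "\<bar>x (f k) t - c k\<bar> < h / 2" "\<bar>x (f k) t - c k'\<bar> < h / 2"
      using f[OF k(1)] f[OF k(2)] k(3) by auto
    ultimately have "\<bar>c k - c k'\<bar> < h" by arith
    moreover have "c k - c k' = (real k - real k') * h" by (simp add: c_def algebra_simps)
    then have "\<bar>c k - c k'\<bar> = \<bar>real k - real k'\<bar> * h" using h by (simp add: abs_mult)
    ultimately have "\<bar>real k - real k'\<bar> < 1" using h by simp
    then show "k = k'" by linarith
  qed
  moreover have "f ` {..N} \<subseteq> {..<N}" using f by auto
  ultimately have "card {..N} \<le> card {..<N}" by (intro card_inj_on_le) auto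
  then show False by simp
qed

lemma cut_drain:
  assumes L: "L \<subseteq> {..<N}" and uv: "u \<in> L" "v < N" "v \<notin> L" and ab: "t0 \<le> a" "a \<le> b"
    and "0 \<le> g"
    and gap: "\<And>t i j. t \<in> {a..b} \<Longrightarrow> i \<in> L \<Longrightarrow> j < N \<Longrightarrow> j \<notin> L \<Longrightarrow> sat s (x j t) - sat s (x i t) \<le> - g"
  shows "g * integral {a..b} (\<alpha> u v) \<le> (\<Sum>i\<in>L. x i a) - (\<Sum>i\<in>L. x i b)"
proof -
  have "integral {a..b} (\<lambda>t. \<Sum>i\<in>L. flow i t) \<le> integral {a..b} (\<lambda>t. - (g * \<alpha> u v t))"
  proof (rule integral_le)
    fix t assume t: "t \<in> {a..b}"
    then have "t \<ge> 0" using ab t0_nonneg by auto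
    have nonneg: "0 \<le> g * \<alpha> i j t" if "i \<in> L" "j \<in> {..<N} - L" for i j
      using that L \<open>0 \<le> g\<close> weight_nonneg[of i j t] \<open>t \<ge> 0\<close> by auto
    have "(\<Sum>i\<in>L. flow i t) = (\<Sum>i\<in>L. \<Sum>j\<in>{..<N} - L. \<alpha> i j t * (sat s (x j t) - sat s (x i t)))"
      using sum_flow_eq_cut_flux[OF L \<open>t \<ge> 0\<close>] .
    also have "\<dots> \<le> (\<Sum>i\<in>L. \<Sum>j\<in>{..<N} - L. - (g * \<alpha> i j t))"
    proof (intro sum_mono)
      fix i j assume "i \<in> L" "j \<in> {..<N} - L"
      then have "\<alpha> i j t * (sat s (x j t) - sat s (x i t)) \<le> \<alpha> i j t * - g"
        using gap[OF t] weight_nonneg[of i j t] \<open>t \<ge> 0\<close> L by (intro mult_left_mono) auto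
      then show "\<alpha> i j t * (sat s (x j t) - sat s (x i t)) \<le> - (g * \<alpha> i j t)" by (simp add: mult_ac)
    qed
    also have "\<dots> \<le> - (g * \<alpha> u v t)"
    proof -
      have "g * \<alpha> u v t \<le> (\<Sum>j\<in>{..<N} - L. g * \<alpha> u j t)"
        using uv nonneg by (intro member_le_sum) auto
      also have "\<dots> \<le> (\<Sum>i\<in>L. \<Sum>j\<in>{..<N} - L. g * \<alpha> i j t)"
        using uv L nonneg finite_subset[OF L]
        by (intro member_le_sum[where f = "\<lambda>i. \<Sum>j\<in>{..<N} - L. g * \<alpha> i j t"] sum_nonneg) auto
      finally show ?thesis by (simp add: sum_negf)
    qed
    finally show "(\<Sum>i\<in>L. flow i t) \<le> - (g * \<alpha> u v t)" .
  qed (use L ab t0_nonneg subsetD[OF L uv(1)] uv(2) in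
      \<open>auto intro!: sum_flow_integrable integrable_neg integrable_on_mult_right weight_integrable\<close>)
  then show ?thesis using sum_state_increment[OF L ab] by (simp add: integral_neg)
qed

text \<open>The total state of \<open>L\<close> stays above \<open>card L * c\<close>, so the drain through \<open>u v\<close> is bounded.\<close>
lemma no_integral_edge_across_gap:
  assumes c: "- s < c" "c < s" and "\<delta> > 0" "t0 \<le> T"
    and L: "L \<subseteq> {..<N}" and uv: "u \<in> L" "v < N" "v \<notin> L"
    and above: "\<And>t i. T \<le> t \<Longrightarrow> i \<in> L \<Longrightarrow> c + \<delta> \<le> x i t"
    and below: "\<And>t j. T \<le> t \<Longrightarrow> j < N \<Longrightarrow> j \<notin> L \<Longrightarrow> x j t \<le> c - \<delta>"
  shows "\<not> integral_edge \<alpha> u v"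
proof -
  define g where "g = sat s (c + \<delta>) - sat s (c - \<delta>)"
  have g: "g > 0" unfolding g_def using c \<open>\<delta> > 0\<close> s_pos by (simp add: sat_eq_clamp max_def min_def)
  have "g * integral {T..t} (\<alpha> u v) \<le> (\<Sum>i\<in>L. x i T) - real (card L) * c" if "T \<le> t" for t
  proof -
    have "g * integral {T..t} (\<alpha> u v) \<le> (\<Sum>i\<in>L. x i T) - (\<Sum>i\<in>L. x i t)"
    proof (rule cut_drain[OF L uv \<open>t0 \<le> T\<close> that less_imp_le[OF g]])
      fix \<tau> i j assume "\<tau> \<in> {T..t}" "i \<in> L" "j < N" "j \<notin> L"
      then show "sat s (x j \<tau>) - sat s (x i \<tau>) \<le> - g"
        using sat_mono[OF s_pos above] sat_mono[OF s_pos below] by (force simp: g_def)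
    qed
    moreover have "real (card L) * c \<le> (\<Sum>i\<in>L. x i t)"
      using sum_mono[of L "\<lambda>_. c" "\<lambda>i. x i t"] above[OF that] \<open>\<delta> > 0\<close> by force
    ultimately show ?thesis by linarith
  qed
  then have "integral {T..t} (\<alpha> u v) \<le> ((\<Sum>i\<in>L. x i T) - real (card L) * c) / g" if "T \<le> t" for t
    using g that by (simp add: pos_le_divide_eq mult.commute)
  moreover have "u < N" using uv L by auto
  ultimately have "(\<integral>\<^sup>+ t. ennreal (indicator {0..} t * \<alpha> u v t) \<partial>lborel) \<noteq> \<infinity>"
    using uv(2) \<open>t0 \<le> T\<close> t0_nonneg
    by (intro nn_integral_atLeast_finite_if_tail_integrals_bounded[where T = T] weight_nonneg
        weight_integrable) auto
  then show ?thesis unfolding integral_edge_def by simp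
qed

lemma avoidedE:
  assumes "avoided c"
  obtains \<delta> T where "\<delta> > 0" "t0 \<le> T"
    "\<And>t i. T \<le> t \<Longrightarrow> i < N \<Longrightarrow> c < x i T \<Longrightarrow> c + \<delta> \<le> x i t"
    "\<And>t i. T \<le> t \<Longrightarrow> i < N \<Longrightarrow> \<not> c < x i T \<Longrightarrow> x i t \<le> c - \<delta>"
proof -
  obtain \<delta> T0 where \<delta>: "\<delta> > 0" and T0: "\<And>t i. T0 \<le> t \<Longrightarrow> i < N \<Longrightarrow> \<delta> \<le> \<bar>x i t - c\<bar>"
    using assms unfolding avoided_def eventually_at_top_linorder by blast
  define T where "T = max T0 t0"
  have T: "t0 \<le> T" and far: "\<And>t i. T \<le> t \<Longrightarrow> i < N \<Longrightarrow> \<delta> \<le> \<bar>x i t - c\<bar>"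
    using T0 by (auto simp: T_def)
  have side: "c < x i t \<longleftrightarrow> c < x i T" if "T \<le> t" "i < N" for t i
    using that T far[of _ i] \<delta>
    by (intro continuous_on_avoiding_level_same_side continuous_on_subset[OF state_continuous[of i t]]) force+
  show thesis
  proof (rule that[OF \<delta> T])
    fix t i assume ti: "T \<le> t" "i < N" and "c < x i T"
    then show "c + \<delta> \<le> x i t" using side[OF ti] far[OF ti] by (simp add: abs_if)
  next
    fix t i assume ti: "T \<le> t" "i < N" and "\<not> c < x i T"
    then show "x i t \<le> c - \<delta>" using side[OF ti] far[OF ti] \<delta> by (simp add: abs_if split: if_splits)
  qed
qed

lemma avoided_level_not_separating:
  assumes "avoided c" "- s < c" "c < s" "integrally_connected N \<alpha>"
  shows "(\<forall>\<^sub>F t in at_top. \<forall>i<N. c < x i t) \<or> (\<forall>\<^sub>F t in at_top. \<forall>i<N. x i t < c)"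
proof -
  obtain \<delta> T where \<delta>: "\<delta> > 0" and T: "t0 \<le> T"
    and above: "\<And>t i. T \<le> t \<Longrightarrow> i < N \<Longrightarrow> c < x i T \<Longrightarrow> c + \<delta> \<le> x i t"
    and below: "\<And>t i. T \<le> t \<Longrightarrow> i < N \<Longrightarrow> \<not> c < x i T \<Longrightarrow> x i t \<le> c - \<delta>"
    using avoidedE[OF assms(1)] by blast
  define L where "L = {i. i < N \<and> c < x i T}"
  consider "L = {}" | "L = {..<N}" | a b where "a \<in> L" "b < N" "b \<notin> L" by (auto simp: L_def)
  then show ?thesis
  proof cases
    case 1
    then have "\<forall>\<^sub>F t in at_top. \<forall>i<N. x i t < c"
      using below \<delta> by (intro eventually_at_top_linorderI[of T]) (force simp: L_def)
    then show ?thesis ..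
  next
    case 2
    then have "\<forall>\<^sub>F t in at_top. \<forall>i<N. c < x i t"
      using above \<delta> by (intro eventually_at_top_linorderI[of T]) (force simp: L_def)
    then show ?thesis ..
  next
    case (3 a b)
    then have "(\<lambda>a b. a < N \<and> b < N \<and> integral_edge \<alpha> a b)\<^sup>*\<^sup>* a b"
      using assms(4) unfolding integrally_connected_def by (auto simp: L_def)
    then obtain u v where "u \<in> L" "v < N" "v \<notin> L" "integral_edge \<alpha> u v"
      using rtranclp_exit_step[of _ a b "\<lambda>i. i \<in> L"] 3 by blast
    moreover have "\<not> integral_edge \<alpha> u v"
      using \<open>u \<in> L\<close> \<open>v < N\<close> \<open>v \<notin> L\<close> above below
      by (intro no_integral_edge_across_gap[OF assms(2,3) \<delta> T, of L]) (auto simp: L_def)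
    ultimately show ?thesis by blast
  qed
qed

lemma consensus_value_eq_average:
  assumes "\<And>i. i < N \<Longrightarrow> (x i \<longlongrightarrow> C) at_top"
  shows "real N * C = (\<Sum>i<N. x i t0)"
proof -
  have "((\<lambda>t. \<Sum>i<N. x i t) \<longlongrightarrow> (\<Sum>i<N. C)) at_top" using assms by (intro tendsto_sum) auto
  moreover have "((\<lambda>t. \<Sum>i<N. x i t) \<longlongrightarrow> (\<Sum>i<N. x i t0)) at_top"
    by (intro tendsto_eventually eventually_at_top_linorderI[of t0] sum_state_const)
  ultimately show ?thesis
    using tendsto_unique[OF trivial_limit_at_top_linorder] by fastforce
qed

text \<open>
  Above the saturation level every agent sees the same output \<open>s\<close>, so all flows vanish there:
  going back from a time at which all agents exceed \<open>s\<close> to the last time some agent \<open>k\<close> was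
  at most \<open>s\<close>, the state of \<open>k\<close> could not have moved.
\<close>
lemma above_saturation_from_start:
  assumes "\<forall>\<^sub>F t in at_top. \<forall>i<N. s < x i t"
  shows "\<forall>t\<ge>t0. \<forall>i<N. s < x i t"
proof (rule ccontr)
  obtain T1 where T1: "\<And>t i. T1 \<le> t \<Longrightarrow> i < N \<Longrightarrow> s < x i t"
    using assms unfolding eventually_at_top_linorder by blast
  define T where "T = max T1 t0"
  define Z where "Z = (\<Union>i<N. {t \<in> {t0..T}. x i t \<le> s})"
  assume "\<not> ?thesis"
  then obtain t i where t: "t0 \<le> t" "i < N" "x i t \<le> s" by (auto simp: not_less)
  then have "t \<le> T" using T1[of t i] by (force simp: T_def)
  then have "Z \<noteq> {}" using t by (auto simp: Z_def)
  moreover have "closed Z"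
    unfolding Z_def
  proof (intro closed_UN ballI)
    fix i assume "i \<in> {..<N}"
    then show "closed {t \<in> {t0..T}. x i t \<le> s}"
      by (intro continuous_on_closed_Collect_le state_continuous continuous_on_const) auto
  qed simp
  moreover have "bdd_above Z" unfolding Z_def bdd_above_def by auto
  ultimately have "Sup Z \<in> Z" by (intro closed_contains_Sup)
  then obtain k where k: "k < N" "x k (Sup Z) \<le> s" "t0 \<le> Sup Z" "Sup Z \<le> T" by (auto simp: Z_def)
  have after: "s < x i u" if "Sup Z < u" "u \<le> T" "i < N" for u i
    using cSup_upper[OF _ \<open>bdd_above Z\<close>, of u] that k(3) by (force simp: Z_def not_le)
  have "x k T - x k (Sup Z) = integral {Sup Z..T} (flow k)" using k by (intro state_increment) auto
  also have "\<dots> = integral {Sup Z..T} (\<lambda>_. 0)"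
  proof (rule integral_spike[of "{Sup Z}"])
    fix u assume "u \<in> {Sup Z..T} - {Sup Z}"
    then show "0 = flow k u"
      using flow_eq_zero_if_saturated_above[OF _ k(1)] after[of u] by (force intro: less_imp_le)
  qed simp
  finally show False using T1[of T k] k by (simp add: T_def)
qed

lemma state_const_if_above_saturation:
  assumes "\<forall>t\<ge>t0. \<forall>i<N. s < x i t" "i < N" "t0 \<le> t"
  shows "x i t = x i t0"
proof -
  have "flow i \<tau> = 0" if "\<tau> \<in> {t0..t}" for \<tau>
  proof (rule flow_eq_zero_if_saturated_above[OF _ assms(2)])
    show "\<forall>j<N. s \<le> x j \<tau>" using assms(1) that by (fastforce intro: less_imp_le)
  qed
  then have "integral {t0..t} (flow i) = integral {t0..t} (\<lambda>_. 0)" by (rule integral_cong)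
  then show ?thesis using state_eq_integral[OF assms(2,3)] by simp
qed

lemma consensus_imp_sum_le:
  assumes "consensus N x" and distinct: "\<exists>i<N. \<exists>j<N. x i t0 \<noteq> x j t0"
  shows "(\<Sum>i<N. x i t0) \<le> real N * s"
proof (rule ccontr)
  assume sum_gt: "\<not> ?thesis"
  obtain C where C: "\<And>i. i < N \<Longrightarrow> (x i \<longlongrightarrow> C) at_top"
    using assms(1) unfolding consensus_def by blast
  have "real N * s < real N * C" using consensus_value_eq_average[OF C] sum_gt by simp
  then have "s < C" by (simp add: mult_less_cancel_left)
  then have "\<forall>i\<in>{..<N}. \<forall>\<^sub>F t in at_top. s < x i t" using C by (auto intro: order_tendstoD(1))
  then have "\<forall>\<^sub>F t in at_top. \<forall>i\<in>{..<N}. s < x i t" by (rule eventually_ball_finite[rotated]) simp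
  then have "\<forall>\<^sub>F t in at_top. \<forall>i<N. s < x i t" by (rule eventually_mono) simp
  then have above: "\<forall>t\<ge>t0. \<forall>i<N. s < x i t" by (rule above_saturation_from_start)
  have "x i t0 = C" if "i < N" for i
  proof (rule tendsto_unique[OF trivial_limit_at_top_linorder _ C[OF that]])
    show "(x i \<longlongrightarrow> x i t0) at_top"
      by (rule tendsto_eventually, rule eventually_at_top_linorderI[of t0],
          rule state_const_if_above_saturation[OF above that])
  qed
  then show False using distinct by auto
qed

text \<open>
  Conservation forbids all agents from ending above a level \<open>c\<close> above the average, so an
  avoided such level (which exists arbitrarily close to the average) ends up above all agents.
\<close>
lemma eventually_below_if_above_average:
  assumes "integrally_connected N \<alpha>" "N > 0" "- s \<le> A" "A < s"
    and average: "real N * A = (\<Sum>i<N. x i t0)" and "e > 0"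
  shows "\<forall>\<^sub>F t in at_top. \<forall>i<N. x i t < A + e"
proof -
  obtain c where c: "A < c" "c < A + min e (s - A)" "avoided c"
    using avoided_dense[of A "A + min e (s - A)"] assms by auto
  have not_above: "\<not> (\<forall>\<^sub>F t in at_top. \<forall>i<N. c < x i t)"
  proof
    assume "\<forall>\<^sub>F t in at_top. \<forall>i<N. c < x i t"
    then obtain t where "t0 \<le> t" "\<forall>i<N. c < x i t"
      unfolding eventually_at_top_linorder by (metis nle_le order_trans)
    then have "(\<Sum>i<N. c) < (\<Sum>i<N. x i t)" using assms(2) by (intro sum_strict_mono) auto
    moreover have "real N * A < real N * c" using c(1) assms(2) by simp
    ultimately show False using sum_state_const[OF \<open>t0 \<le> t\<close>] average by simp
  qed
  have "\<forall>\<^sub>F t in at_top. \<forall>i<N. x i t < c"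
    using avoided_level_not_separating[OF c(3) _ _ assms(1)] not_above c assms(3) by fastforce
  then show ?thesis by (rule eventually_mono) (use c in fastforce)
qed

lemma consensus_if_average_below_saturation:
  assumes "integrally_connected N \<alpha>" "N > 0"
    and "- (real N * s) \<le> (\<Sum>i<N. x i t0)" "(\<Sum>i<N. x i t0) < real N * s"
  shows "consensus N x"
proof -
  define A where "A = (\<Sum>i<N. x i t0) / real N"
  have average: "real N * A = (\<Sum>i<N. x i t0)" using assms(2) by (simp add: A_def)
  have A: "- s \<le> A" "A < s" using assms by (auto simp: A_def field_simps)
  have "(x i \<longlongrightarrow> A) at_top" if "i < N" for i
  proof (rule order_tendstoI)
    fix a assume "A < a"
    show "\<forall>\<^sub>F t in at_top. x i t < a"
      using eventually_below_if_above_average[OF assms(1,2) A average, of "a - A"] \<open>A < a\<close> that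
      by (auto elim: eventually_mono)
  next
    fix a assume "a < A"
    define d where "d = (A - a) / real N"
    have d: "d > 0" "(real N - 1) * d < A - a"
      using \<open>a < A\<close> assms(2) by (auto simp: d_def field_simps)
    have "\<forall>\<^sub>F t in at_top. t0 \<le> t \<and> (\<forall>j<N. x j t < A + d)"
      using eventually_below_if_above_average[OF assms(1,2) A average d(1)] eventually_ge_at_top[of t0]
      by eventually_elim auto
    then show "\<forall>\<^sub>F t in at_top. a < x i t"
    proof (rule eventually_mono)
      fix t assume t: "t0 \<le> t \<and> (\<forall>j<N. x j t < A + d)"
      then have "A - (real N - 1) * d \<le> x i t"
        using member_ge_if_sum_eq_and_upper_bounds[of "{..<N}" i "\<lambda>j. x j t" A d] that
          sum_state_const[of t] average by (auto intro: less_imp_le)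
      then show "a < x i t" using d(2) by linarith
    qed
  qed
  then show ?thesis unfolding consensus_def by blast
qed

end

theorem theorem2:
  fixes N :: nat and s t0 :: real
    and \<alpha> :: "nat \<Rightarrow> nat \<Rightarrow> real \<Rightarrow> real" and x :: "nat \<Rightarrow> real \<Rightarrow> real"
  assumes "s > 0" and "t0 \<ge> 0"
    and "standing_weights N \<alpha>"
    and "integrally_connected N \<alpha>"
    and "caratheodory_solution N s \<alpha> t0 x"
    and "\<exists>i<N. \<exists>j<N. x i t0 \<noteq> x j t0"
  shows "consensus N x \<longleftrightarrow> \<bar>\<Sum>i<N. x i t0\<bar> / real N \<le> s"
proof -
  interpret saturated_consensus N s t0 \<alpha> x using assms(1,2,3,5) by unfold_locales
  interpret neg: saturated_consensus N s t0 \<alpha> "\<lambda>i t. - x i t" by (rule uminus)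
  have "N > 0" using assms(6) by auto
  define S where "S = (\<Sum>i<N. x i t0)"
  have neg_sum: "(\<Sum>i<N. - x i t0) = - S" by (simp add: S_def sum_negf)
  have neg_distinct: "\<exists>i<N. \<exists>j<N. - x i t0 \<noteq> - x j t0" using assms(6) by auto
  have "consensus N x \<longleftrightarrow> \<bar>S\<bar> \<le> real N * s"
  proof
    assume "consensus N x"
    then have "S \<le> real N * s" "- S \<le> real N * s"
      using consensus_imp_sum_le[OF _ assms(6)] neg.consensus_imp_sum_le[OF _ neg_distinct]
      by (auto simp: S_def neg_sum consensus_uminus)
    then show "\<bar>S\<bar> \<le> real N * s" by linarith
  next
    assume "\<bar>S\<bar> \<le> real N * s"
    moreover have "0 < real N * s" using \<open>N > 0\<close> assms(1) by simp
    txt \<open>The boundary case \<open>S = N s\<close> is an interior case for the negated states.\<close>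
    ultimately consider "- (real N * s) \<le> S" "S < real N * s" | "- (real N * s) \<le> - S" "- S < real N * s"
      by linarith
    then show "consensus N x"
      using consensus_if_average_below_saturation[OF assms(4) \<open>N > 0\<close>]
        neg.consensus_if_average_below_saturation[OF assms(4) \<open>N > 0\<close>]
      by cases (auto simp: S_def neg_sum consensus_uminus)
  qed
  then show ?thesis using \<open>N > 0\<close> by (simp add: S_def pos_divide_le_eq mult.commute)
qed

end
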